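(* Let $(\mathcal{C},\wedge,S)$ be a braided monoidal category with braiding $\beta$, and let $T$ be an object of $\mathcal{C}$. Assume that $T$ is symmetric and dualizable. Then $T$ has $t$-twisted trivial braiding, where $t = \mathrm{id}_T \wedge (\varepsilon \beta_{T,T^\vee}^{-1} \eta)$ is multiplication by the Euler characteristic of $T$.
   Context: Here $T$ is called symmetric if $(\mathrm{id}_T \wedge \beta_{T,T}^{-1})(\beta_{T,T} \wedge \mathrm{id}_T) = \mathrm{id}_{T\wedge T\wedge T}$. $T$ is dualizable with dual $T^\vee$, meaning there are morphisms $\eta: S \to T^\vee \wedge T$ (unit) and $\varepsilon: T \wedge T^\vee \to S$ (counit) satisfying the triangle equations $(\varepsilon \wedge \mathrm{id}_T)(\mathrm{id}_T \wedge \eta) = \mathrm{id}_T$ and $(\mathrm{id}_{T^\vee} \wedge \varepsilon)(\eta \wedge \mathrm{id}_{T^\vee}) = \mathrm{id}_{T^\vee}$. For an endomorphism $t: T \to T$, $T$ is said to have $t$-twisted trivial braiding if $\beta_{T,T} = \mathrm{id}_T \wedge t$ (equivalently $\beta_{T,T} = t \wedge \mathrm{id}_T$). Monoidal structure is taken to be strict. The composite $\varepsilon \beta_{T,T^\vee}^{-1} \eta : S \to S$ is the Euler characteristic of $T$. *)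

theory Defs
  imports Main
begin

text \<open>Composition cmp C g f means "g after f".\<close>

record ('o, 'm) bmcat =
  Ob    :: "'o set"
  Arr   :: "'m set"
  dom   :: "'m \<Rightarrow> 'o"
  cod   :: "'m \<Rightarrow> 'o"
  cmp   :: "'m \<Rightarrow> 'm \<Rightarrow> 'm"
  ident :: "'o \<Rightarrow> 'm"
  tob   :: "'o \<Rightarrow> 'o \<Rightarrow> 'o"
  tar   :: "'m \<Rightarrow> 'm \<Rightarrow> 'm"
  unit  :: "'o"
  braid :: "'o \<Rightarrow> 'o \<Rightarrow> 'm"

definition hom :: "('o, 'm) bmcat \<Rightarrow> 'm \<Rightarrow> 'o \<Rightarrow> 'o \<Rightarrow> bool" where
  "hom C f A B \<longleftrightarrow> f \<in> Arr C \<and> dom C f = A \<and> cod C f = B"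

definition is_iso :: "('o, 'm) bmcat \<Rightarrow> 'm \<Rightarrow> bool" where
  "is_iso C f \<longleftrightarrow> f \<in> Arr C \<and> (\<exists>g. hom C g (cod C f) (dom C f) \<and>
      cmp C g f = ident C (dom C f) \<and> cmp C f g = ident C (cod C f))"

definition inv_arr :: "('o, 'm) bmcat \<Rightarrow> 'm \<Rightarrow> 'm" where
  "inv_arr C f = (THE g. hom C g (cod C f) (dom C f) \<and>
      cmp C g f = ident C (dom C f) \<and> cmp C f g = ident C (cod C f))"

definition category :: "('o, 'm) bmcat \<Rightarrow> bool" where
  "category C \<longleftrightarrow>
    (\<forall>f \<in> Arr C. dom C f \<in> Ob C \<and> cod C f \<in> Ob C) \<and>
    (\<forall>A \<in> Ob C. hom C (ident C A) A A) \<and>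
    (\<forall>f g. f \<in> Arr C \<and> g \<in> Arr C \<and> cod C f = dom C g \<longrightarrow>
        hom C (cmp C g f) (dom C f) (cod C g)) \<and>
    (\<forall>f g h. f \<in> Arr C \<and> g \<in> Arr C \<and> h \<in> Arr C \<and> cod C f = dom C g \<and> cod C g = dom C h
        \<longrightarrow> cmp C h (cmp C g f) = cmp C (cmp C h g) f) \<and>
    (\<forall>f \<in> Arr C. cmp C (ident C (cod C f)) f = f \<and> cmp C f (ident C (dom C f)) = f)"

definition strict_monoidal :: "('o, 'm) bmcat \<Rightarrow> bool" where
  "strict_monoidal C \<longleftrightarrow> category C \<and>
    unit C \<in> Ob C \<and>
    (\<forall>A \<in> Ob C. \<forall>B \<in> Ob C. tob C A B \<in> Ob C) \<and>
    (\<forall>f \<in> Arr C. \<forall>g \<in> Arr C.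
        hom C (tar C f g) (tob C (dom C f) (dom C g)) (tob C (cod C f) (cod C g))) \<and>
    (\<forall>A \<in> Ob C. \<forall>B \<in> Ob C. tar C (ident C A) (ident C B) = ident C (tob C A B)) \<and>
    (\<forall>f g f' g'. f \<in> Arr C \<and> g \<in> Arr C \<and> f' \<in> Arr C \<and> g' \<in> Arr C \<and>
        cod C f = dom C g \<and> cod C f' = dom C g' \<longrightarrow>
        tar C (cmp C g f) (cmp C g' f') = cmp C (tar C g g') (tar C f f')) \<and>
    (\<forall>A \<in> Ob C. \<forall>B \<in> Ob C. \<forall>D \<in> Ob C. tob C (tob C A B) D = tob C A (tob C B D)) \<and>
    (\<forall>A \<in> Ob C. tob C (unit C) A = A \<and> tob C A (unit C) = A) \<and>
    (\<forall>f \<in> Arr C. \<forall>g \<in> Arr C. \<forall>h \<in> Arr C. tar C (tar C f g) h = tar C f (tar C g h)) \<and>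
    (\<forall>f \<in> Arr C. tar C (ident C (unit C)) f = f \<and> tar C f (ident C (unit C)) = f)"

definition braided_strict_monoidal :: "('o, 'm) bmcat \<Rightarrow> bool" where
  "braided_strict_monoidal C \<longleftrightarrow> strict_monoidal C \<and>
    (\<forall>A \<in> Ob C. \<forall>B \<in> Ob C.
        hom C (braid C A B) (tob C A B) (tob C B A) \<and> is_iso C (braid C A B)) \<and>
    (\<forall>f \<in> Arr C. \<forall>g \<in> Arr C.
        cmp C (braid C (cod C f) (cod C g)) (tar C f g)
          = cmp C (tar C g f) (braid C (dom C f) (dom C g))) \<and>
    (\<forall>A \<in> Ob C. \<forall>B \<in> Ob C. \<forall>D \<in> Ob C.
        braid C (tob C A B) D
          = cmp C (tar C (braid C A D) (ident C B)) (tar C (ident C A) (braid C B D))) \<and>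
    (\<forall>A \<in> Ob C. \<forall>B \<in> Ob C. \<forall>D \<in> Ob C.
        braid C A (tob C B D)
          = cmp C (tar C (ident C B) (braid C A D)) (tar C (braid C A B) (ident C D)))"

definition symmetric_obj :: "('o, 'm) bmcat \<Rightarrow> 'o \<Rightarrow> bool" where
  "symmetric_obj C T \<longleftrightarrow>
    cmp C (tar C (ident C T) (inv_arr C (braid C T T))) (tar C (braid C T T) (ident C T))
      = ident C (tob C T (tob C T T))"

definition is_dual :: "('o, 'm) bmcat \<Rightarrow> 'o \<Rightarrow> 'o \<Rightarrow> 'm \<Rightarrow> 'm \<Rightarrow> bool" where
  "is_dual C T Tv \<eta> \<epsilon> \<longleftrightarrow> Tv \<in> Ob C \<and>
    hom C \<eta> (unit C) (tob C Tv T) \<and> hom C \<epsilon> (tob C T Tv) (unit C) \<and>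
    cmp C (tar C \<epsilon> (ident C T)) (tar C (ident C T) \<eta>) = ident C T \<and>
    cmp C (tar C (ident C Tv) \<epsilon>) (tar C \<eta> (ident C Tv)) = ident C Tv"

definition euler_char :: "('o, 'm) bmcat \<Rightarrow> 'o \<Rightarrow> 'o \<Rightarrow> 'm \<Rightarrow> 'm \<Rightarrow> 'm" where
  "euler_char C T Tv \<eta> \<epsilon> = cmp C \<epsilon> (cmp C (inv_arr C (braid C T Tv)) \<eta>)"

definition twisted_trivial_braiding :: "('o, 'm) bmcat \<Rightarrow> 'o \<Rightarrow> 'm \<Rightarrow> bool" where
  "twisted_trivial_braiding C T t \<longleftrightarrow> braid C T T = tar C (ident C T) t"

end

theory Submission
  imports Defs
begin

(* Write \<beta> = \<beta>_{T,T} and \<chi> for the Euler characteristic. Symmetry of T says that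
   id_T \<wedge> \<beta>^-1 is inverse to \<beta> \<wedge> id_T, hence equals \<beta>^-1 \<wedge> id_T. Expanding the scalar \<chi>,
   this lets us rewrite \<beta>^-1 \<wedge> \<chi> as id_T \<wedge> Z with
   Z = (id_T \<wedge> \<epsilon>)(\<beta>^-1 \<wedge> id)(id_T \<wedge> \<beta>_{T,Tv}^-1 \<eta>). By the hexagon axiom the middle of Z
   is \<beta>_{T,T\<wedge>Tv}^-1, and naturality of the braiding with respect to \<epsilon> : T \<wedge> Tv \<rightarrow> S
   (where \<beta>_{T,S} = id) turns Z into the zigzag composite (\<epsilon> \<wedge> id_T)(id_T \<wedge> \<eta>) = id_T.
   So \<beta>^-1 \<wedge> \<chi> = id, i.e. \<beta> = id_{T\<wedge>T} \<wedge> \<chi>. *)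

locale braided_strict_monoidal_category =
  fixes C :: "('o, 'm) bmcat"
  assumes braided_strict_monoidal: "braided_strict_monoidal C"
begin

abbreviation cmp_infix (infixr "\<cdot>" 55) where "g \<cdot> f \<equiv> cmp C g f"
abbreviation tar_infix (infixr "\<otimes>" 70) where "f \<otimes> g \<equiv> tar C f g"
abbreviation tob_infix (infixr "\<star>" 70) where "A \<star> B \<equiv> tob C A B"
abbreviation ident_sub ("\<one>\<^bsub>_\<^esub>") where "\<one>\<^bsub>A\<^esub> \<equiv> ident C A"
abbreviation S where "S \<equiv> unit C"

lemma strict_monoidal: "strict_monoidal C"
  using braided_strict_monoidal unfolding braided_strict_monoidal_def by blast

lemma category: "category C"
  using strict_monoidal unfolding strict_monoidal_def by blast

lemma hom_ob:
  assumes "hom C f A B"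
  shows "A \<in> Ob C" and "B \<in> Ob C"
  using assms category unfolding category_def hom_def by blast+

lemma ident_hom: "A \<in> Ob C \<Longrightarrow> hom C \<one>\<^bsub>A\<^esub> A A"
  using category unfolding category_def by blast

lemma cmp_hom: "hom C f A B \<Longrightarrow> hom C g B D \<Longrightarrow> hom C (g \<cdot> f) A D"
  using category unfolding category_def hom_def by metis

lemma cmp_assoc: "hom C f A B \<Longrightarrow> hom C g B D \<Longrightarrow> hom C h D E \<Longrightarrow> h \<cdot> g \<cdot> f = (h \<cdot> g) \<cdot> f"
  using category unfolding category_def hom_def by metis

lemma ident_cmp: "hom C f A B \<Longrightarrow> \<one>\<^bsub>B\<^esub> \<cdot> f = f"
  using category unfolding category_def hom_def by metis

lemma cmp_ident: "hom C f A B \<Longrightarrow> f \<cdot> \<one>\<^bsub>A\<^esub> = f"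
  using category unfolding category_def hom_def by metis

lemma unit_ob: "S \<in> Ob C"
  using strict_monoidal unfolding strict_monoidal_def by blast

lemma tob_ob: "A \<in> Ob C \<Longrightarrow> B \<in> Ob C \<Longrightarrow> A \<star> B \<in> Ob C"
  using strict_monoidal unfolding strict_monoidal_def by blast

lemma tob_assoc: "A \<in> Ob C \<Longrightarrow> B \<in> Ob C \<Longrightarrow> D \<in> Ob C \<Longrightarrow> (A \<star> B) \<star> D = A \<star> B \<star> D"
  using strict_monoidal unfolding strict_monoidal_def by blast

lemma unit_tob: "A \<in> Ob C \<Longrightarrow> S \<star> A = A"
  and tob_unit: "A \<in> Ob C \<Longrightarrow> A \<star> S = A"
  using strict_monoidal unfolding strict_monoidal_def by blast+

lemma tar_hom: "hom C f A B \<Longrightarrow> hom C g A' B' \<Longrightarrow> hom C (f \<otimes> g) (A \<star> A') (B \<star> B')"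
  using strict_monoidal unfolding strict_monoidal_def hom_def by metis

lemma tar_ident: "A \<in> Ob C \<Longrightarrow> B \<in> Ob C \<Longrightarrow> \<one>\<^bsub>A\<^esub> \<otimes> \<one>\<^bsub>B\<^esub> = \<one>\<^bsub>A \<star> B\<^esub>"
  using strict_monoidal unfolding strict_monoidal_def by blast

lemma interchange: "hom C f A B \<Longrightarrow> hom C g B D \<Longrightarrow> hom C f' A' B' \<Longrightarrow> hom C g' B' D' \<Longrightarrow>
    (g \<cdot> f) \<otimes> (g' \<cdot> f') = (g \<otimes> g') \<cdot> (f \<otimes> f')"
  using strict_monoidal unfolding strict_monoidal_def hom_def by metis

lemma tar_assoc: "hom C f A B \<Longrightarrow> hom C g A' B' \<Longrightarrow> hom C h A'' B'' \<Longrightarrow> (f \<otimes> g) \<otimes> h = f \<otimes> g \<otimes> h"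
  using strict_monoidal unfolding strict_monoidal_def hom_def by metis

lemma unit_tar: "hom C f A B \<Longrightarrow> \<one>\<^bsub>S\<^esub> \<otimes> f = f"
  and tar_unit: "hom C f A B \<Longrightarrow> f \<otimes> \<one>\<^bsub>S\<^esub> = f"
  using strict_monoidal unfolding strict_monoidal_def hom_def by metis+

lemma braid_hom: "A \<in> Ob C \<Longrightarrow> B \<in> Ob C \<Longrightarrow> hom C (braid C A B) (A \<star> B) (B \<star> A)"
  using braided_strict_monoidal unfolding braided_strict_monoidal_def by blast

lemma braid_iso: "A \<in> Ob C \<Longrightarrow> B \<in> Ob C \<Longrightarrow> is_iso C (braid C A B)"
  using braided_strict_monoidal unfolding braided_strict_monoidal_def by blast

lemma braid_natural: "hom C f A B \<Longrightarrow> hom C g A' B' \<Longrightarrow>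
    braid C B B' \<cdot> (f \<otimes> g) = (g \<otimes> f) \<cdot> braid C A A'"
  using braided_strict_monoidal unfolding braided_strict_monoidal_def hom_def by metis

lemma braid_tob_right: "A \<in> Ob C \<Longrightarrow> B \<in> Ob C \<Longrightarrow> D \<in> Ob C \<Longrightarrow>
    braid C A (B \<star> D) = (\<one>\<^bsub>B\<^esub> \<otimes> braid C A D) \<cdot> (braid C A B \<otimes> \<one>\<^bsub>D\<^esub>)"
  using braided_strict_monoidal unfolding braided_strict_monoidal_def by blast

lemma ident_tar_cmp:
  assumes "X \<in> Ob C" "hom C f A B" "hom C g B D"
  shows "\<one>\<^bsub>X\<^esub> \<otimes> (g \<cdot> f) = (\<one>\<^bsub>X\<^esub> \<otimes> g) \<cdot> (\<one>\<^bsub>X\<^esub> \<otimes> f)"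
  using interchange[OF ident_hom ident_hom assms(2,3)] ident_cmp[OF ident_hom] assms(1) by simp

lemma inv_arr_eqI:
  assumes f: "hom C f A B" and g: "hom C g B A" and gf: "g \<cdot> f = \<one>\<^bsub>A\<^esub>" and fg: "f \<cdot> g = \<one>\<^bsub>B\<^esub>"
  shows "inv_arr C f = g"
proof -
  have dom_cod: "dom C f = A" "cod C f = B"
    using f unfolding hom_def by auto
  show ?thesis
    unfolding inv_arr_def dom_cod
  proof (rule the_equality)
    show "hom C g B A \<and> g \<cdot> f = \<one>\<^bsub>A\<^esub> \<and> f \<cdot> g = \<one>\<^bsub>B\<^esub>"
      using g gf fg by blast
  next
    fix g' assume g': "hom C g' B A \<and> g' \<cdot> f = \<one>\<^bsub>A\<^esub> \<and> f \<cdot> g' = \<one>\<^bsub>B\<^esub>"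
    then have g'_hom: "hom C g' B A" by blast
    have "g' = g' \<cdot> f \<cdot> g"
      using cmp_ident[OF g'_hom] fg by simp
    also have "\<dots> = (g' \<cdot> f) \<cdot> g"
      using cmp_assoc[OF g f g'_hom] .
    also have "\<dots> = g"
      using g' ident_cmp[OF g] by simp
    finally show "g' = g" .
  qed
qed

lemma is_isoI:
  assumes "hom C f A B" "hom C g B A" "g \<cdot> f = \<one>\<^bsub>A\<^esub>" "f \<cdot> g = \<one>\<^bsub>B\<^esub>"
  shows "is_iso C f"
proof -
  have "f \<in> Arr C" "dom C f = A" "cod C f = B"
    using assms(1) unfolding hom_def by auto
  then show ?thesis
    unfolding is_iso_def using assms(2-4) by auto
qed

lemma
  assumes "is_iso C f" "hom C f A B"
  shows inv_arr_hom: "hom C (inv_arr C f) B A"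
    and left_inv_arr: "inv_arr C f \<cdot> f = \<one>\<^bsub>A\<^esub>"
    and right_inv_arr: "f \<cdot> inv_arr C f = \<one>\<^bsub>B\<^esub>"
proof -
  have dom_cod: "dom C f = A" "cod C f = B"
    using assms(2) unfolding hom_def by auto
  obtain g where "hom C g B A" "g \<cdot> f = \<one>\<^bsub>A\<^esub>" "f \<cdot> g = \<one>\<^bsub>B\<^esub>"
    using assms(1)[unfolded is_iso_def dom_cod] by blast
  moreover from this have "inv_arr C f = g"
    by (rule inv_arr_eqI[OF assms(2)])
  ultimately show "hom C (inv_arr C f) B A"
    and "inv_arr C f \<cdot> f = \<one>\<^bsub>A\<^esub>" and "f \<cdot> inv_arr C f = \<one>\<^bsub>B\<^esub>"
    by simp_all
qed

lemma left_inverse_eq_inv_arr: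
  assumes f: "is_iso C f" "hom C f A B" and g: "hom C g B A" and gf: "g \<cdot> f = \<one>\<^bsub>A\<^esub>"
  shows "g = inv_arr C f"
proof -
  have "g = g \<cdot> f \<cdot> inv_arr C f"
    using right_inv_arr[OF f] cmp_ident[OF g] by simp
  also have "\<dots> = (g \<cdot> f) \<cdot> inv_arr C f"
    using cmp_assoc[OF inv_arr_hom[OF f] f(2) g] .
  also have "\<dots> = inv_arr C f"
    using gf ident_cmp[OF inv_arr_hom[OF f]] by simp
  finally show ?thesis .
qed

lemma
  assumes "A \<in> Ob C"
  shows ident_is_iso: "is_iso C \<one>\<^bsub>A\<^esub>"
    and inv_arr_ident: "inv_arr C \<one>\<^bsub>A\<^esub> = \<one>\<^bsub>A\<^esub>"
proof -
  have i: "hom C \<one>\<^bsub>A\<^esub> A A" and ii: "\<one>\<^bsub>A\<^esub> \<cdot> \<one>\<^bsub>A\<^esub> = \<one>\<^bsub>A\<^esub>"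
    using ident_hom[OF assms] ident_cmp[OF ident_hom[OF assms]] by simp_all
  show "is_iso C \<one>\<^bsub>A\<^esub>" and "inv_arr C \<one>\<^bsub>A\<^esub> = \<one>\<^bsub>A\<^esub>"
    using is_isoI[OF i i ii ii] inv_arr_eqI[OF i i ii ii] by simp_all
qed

lemma
  assumes f: "is_iso C f" "hom C f A B" and g: "is_iso C g" "hom C g A' B'"
  shows is_iso_tar: "is_iso C (f \<otimes> g)"
    and inv_arr_tar: "inv_arr C (f \<otimes> g) = inv_arr C f \<otimes> inv_arr C g"
proof -
  have fg: "hom C (f \<otimes> g) (A \<star> A') (B \<star> B')"
    by (rule tar_hom[OF f(2) g(2)])
  have fg': "hom C (inv_arr C f \<otimes> inv_arr C g) (B \<star> B') (A \<star> A')"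
    by (rule tar_hom[OF inv_arr_hom[OF f] inv_arr_hom[OF g]])
  have "(inv_arr C f \<otimes> inv_arr C g) \<cdot> (f \<otimes> g) = \<one>\<^bsub>A \<star> A'\<^esub>"
    using interchange[OF f(2) inv_arr_hom[OF f] g(2) inv_arr_hom[OF g], symmetric]
      left_inv_arr[OF f] left_inv_arr[OF g] tar_ident[OF hom_ob(1)[OF f(2)] hom_ob(1)[OF g(2)]]
    by simp
  moreover have "(f \<otimes> g) \<cdot> (inv_arr C f \<otimes> inv_arr C g) = \<one>\<^bsub>B \<star> B'\<^esub>"
    using interchange[OF inv_arr_hom[OF f] f(2) inv_arr_hom[OF g] g(2), symmetric]
      right_inv_arr[OF f] right_inv_arr[OF g] tar_ident[OF hom_ob(2)[OF f(2)] hom_ob(2)[OF g(2)]]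
    by simp
  ultimately show "is_iso C (f \<otimes> g)" and "inv_arr C (f \<otimes> g) = inv_arr C f \<otimes> inv_arr C g"
    using is_isoI[OF fg fg'] inv_arr_eqI[OF fg fg'] by simp_all
qed

lemma inv_arr_cmp:
  assumes f: "is_iso C f" "hom C f A B" and g: "is_iso C g" "hom C g B D"
  shows "inv_arr C (g \<cdot> f) = inv_arr C f \<cdot> inv_arr C g"
proof (rule inv_arr_eqI)
  note f' = inv_arr_hom[OF f] and g' = inv_arr_hom[OF g]
  show gf: "hom C (g \<cdot> f) A D"
    by (rule cmp_hom[OF f(2) g(2)])
  show "hom C (inv_arr C f \<cdot> inv_arr C g) D A"
    by (rule cmp_hom[OF g' f'])
  have "(inv_arr C f \<cdot> inv_arr C g) \<cdot> g \<cdot> f = inv_arr C f \<cdot> (inv_arr C g \<cdot> g) \<cdot> f"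
    using cmp_assoc[OF gf g' f'] cmp_assoc[OF f(2) g(2) g'] by simp
  also have "\<dots> = \<one>\<^bsub>A\<^esub>"
    using left_inv_arr[OF g] left_inv_arr[OF f] ident_cmp[OF f(2)] by simp
  finally show "(inv_arr C f \<cdot> inv_arr C g) \<cdot> g \<cdot> f = \<one>\<^bsub>A\<^esub>" .
  have "(g \<cdot> f) \<cdot> inv_arr C f \<cdot> inv_arr C g = g \<cdot> (f \<cdot> inv_arr C f) \<cdot> inv_arr C g"
    using cmp_assoc[OF cmp_hom[OF g' f'] f(2) g(2)] cmp_assoc[OF g' f' f(2)] by simp
  also have "\<dots> = \<one>\<^bsub>D\<^esub>"
    using right_inv_arr[OF g] right_inv_arr[OF f] ident_cmp[OF g'] by simp
  finally show "(g \<cdot> f) \<cdot> inv_arr C f \<cdot> inv_arr C g = \<one>\<^bsub>D\<^esub>" .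
qed

lemma iso_idempotent_eq_ident:
  assumes f: "is_iso C f" "hom C f A A" and ff: "f \<cdot> f = f"
  shows "f = \<one>\<^bsub>A\<^esub>"
proof -
  have "f = (inv_arr C f \<cdot> f) \<cdot> f"
    using left_inv_arr[OF f] ident_cmp[OF f(2)] by simp
  also have "\<dots> = inv_arr C f \<cdot> f \<cdot> f"
    using cmp_assoc[OF f(2) f(2) inv_arr_hom[OF f]] by simp
  also have "\<dots> = \<one>\<^bsub>A\<^esub>"
    using ff left_inv_arr[OF f] by simp
  finally show ?thesis .
qed

lemma braid_unit_right:
  assumes A: "A \<in> Ob C"
  shows "braid C A S = \<one>\<^bsub>A\<^esub>"
proof -
  have b: "hom C (braid C A S) A A"
    using braid_hom[OF A unit_ob] tob_unit[OF A] unit_tob[OF A] by simp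
  have "braid C A S = (\<one>\<^bsub>S\<^esub> \<otimes> braid C A S) \<cdot> (braid C A S \<otimes> \<one>\<^bsub>S\<^esub>)"
    using braid_tob_right[OF A unit_ob unit_ob] tob_unit[OF unit_ob] by simp
  also have "\<dots> = braid C A S \<cdot> braid C A S"
    using unit_tar[OF b] tar_unit[OF b] by simp
  finally show ?thesis
    using iso_idempotent_eq_ident[OF braid_iso[OF A unit_ob] b] by simp
qed

lemma ident_tar_to_unit_cmp_inv_braid:
  assumes A: "A \<in> Ob C" and f: "hom C f X S"
  shows "(\<one>\<^bsub>A\<^esub> \<otimes> f) \<cdot> inv_arr C (braid C A X) = f \<otimes> \<one>\<^bsub>A\<^esub>"
proof -
  note b = braid_iso[OF A hom_ob(1)[OF f]] braid_hom[OF A hom_ob(1)[OF f]]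
  have Af: "hom C (\<one>\<^bsub>A\<^esub> \<otimes> f) (A \<star> X) A"
    using tar_hom[OF ident_hom[OF A] f] tob_unit[OF A] by simp
  have fA: "hom C (f \<otimes> \<one>\<^bsub>A\<^esub>) (X \<star> A) A"
    using tar_hom[OF f ident_hom[OF A]] unit_tob[OF A] by simp
  have "\<one>\<^bsub>A\<^esub> \<otimes> f = (f \<otimes> \<one>\<^bsub>A\<^esub>) \<cdot> braid C A X"
    using braid_natural[OF ident_hom[OF A] f] braid_unit_right[OF A] ident_cmp[OF Af] by simp
  then have "(\<one>\<^bsub>A\<^esub> \<otimes> f) \<cdot> inv_arr C (braid C A X)
      = (f \<otimes> \<one>\<^bsub>A\<^esub>) \<cdot> braid C A X \<cdot> inv_arr C (braid C A X)"
    using cmp_assoc[OF inv_arr_hom[OF b] b(2) fA] by simp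
  also have "\<dots> = f \<otimes> \<one>\<^bsub>A\<^esub>"
    using right_inv_arr[OF b] cmp_ident[OF fA] by simp
  finally show ?thesis .
qed

lemma inv_braid_tob_right:
  assumes A: "A \<in> Ob C" and B: "B \<in> Ob C" and D: "D \<in> Ob C"
  shows "inv_arr C (braid C A (B \<star> D))
    = (inv_arr C (braid C A B) \<otimes> \<one>\<^bsub>D\<^esub>) \<cdot> (\<one>\<^bsub>B\<^esub> \<otimes> inv_arr C (braid C A D))"
proof -
  note AB = braid_iso[OF A B] braid_hom[OF A B] and AD = braid_iso[OF A D] braid_hom[OF A D]
  note iB = ident_is_iso[OF B] ident_hom[OF B] and iD = ident_is_iso[OF D] ident_hom[OF D]
  have "hom C (braid C A B \<otimes> \<one>\<^bsub>D\<^esub>) (A \<star> B \<star> D) (B \<star> A \<star> D)"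
    using tar_hom[OF AB(2) iD(2)] tob_assoc A B D by simp
  moreover have "hom C (\<one>\<^bsub>B\<^esub> \<otimes> braid C A D) (B \<star> A \<star> D) (B \<star> D \<star> A)"
    by (rule tar_hom[OF iB(2) AD(2)])
  ultimately show ?thesis
    using braid_tob_right[OF A B D] inv_arr_cmp is_iso_tar[OF AB iD] is_iso_tar[OF iB AD]
      inv_arr_tar[OF AB iD] inv_arr_tar[OF iB AD] inv_arr_ident[OF B] inv_arr_ident[OF D]
    by simp
qed

lemma euler_char_hom:
  assumes "T \<in> Ob C" and "is_dual C T V \<eta> \<epsilon>"
  shows "hom C (euler_char C T V \<eta> \<epsilon>) S S"
  using assms cmp_hom inv_arr_hom braid_iso braid_hom
  unfolding is_dual_def euler_char_def by metis

lemma braided_zigzag: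
  assumes T: "T \<in> Ob C" and dual: "is_dual C T V \<eta> \<epsilon>"
  shows "(\<one>\<^bsub>T\<^esub> \<otimes> \<epsilon>) \<cdot> (inv_arr C (braid C T T) \<otimes> \<one>\<^bsub>V\<^esub>)
      \<cdot> (\<one>\<^bsub>T\<^esub> \<otimes> (inv_arr C (braid C T V) \<cdot> \<eta>)) = \<one>\<^bsub>T\<^esub>"
proof -
  have V: "V \<in> Ob C" and \<eta>: "hom C \<eta> S (V \<star> T)" and \<epsilon>: "hom C \<epsilon> (T \<star> V) S"
    and zigzag: "(\<epsilon> \<otimes> \<one>\<^bsub>T\<^esub>) \<cdot> (\<one>\<^bsub>T\<^esub> \<otimes> \<eta>) = \<one>\<^bsub>T\<^esub>"
    using dual unfolding is_dual_def by auto
  let ?b = "inv_arr C (braid C T T)" and ?bV = "inv_arr C (braid C T V)"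
    and ?bTV = "inv_arr C (braid C T (T \<star> V))"
  have bV: "hom C ?bV (V \<star> T) (T \<star> V)"
    using inv_arr_hom[OF braid_iso braid_hom] T V by blast
  have bTV: "hom C ?bTV (T \<star> V \<star> T) (T \<star> T \<star> V)"
    using inv_arr_hom[OF braid_iso braid_hom] tob_ob tob_assoc T V by metis
  have b_V: "hom C (?b \<otimes> \<one>\<^bsub>V\<^esub>) (T \<star> T \<star> V) (T \<star> T \<star> V)"
    using tar_hom[OF inv_arr_hom[OF braid_iso[OF T T] braid_hom[OF T T]] ident_hom[OF V]]
      tob_assoc T V by simp
  have T_bV: "hom C (\<one>\<^bsub>T\<^esub> \<otimes> ?bV) (T \<star> V \<star> T) (T \<star> T \<star> V)"
    by (rule tar_hom[OF ident_hom[OF T] bV])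
  have T_\<eta>: "hom C (\<one>\<^bsub>T\<^esub> \<otimes> \<eta>) T (T \<star> V \<star> T)"
    using tar_hom[OF ident_hom[OF T] \<eta>] tob_unit[OF T] by simp
  have T_\<epsilon>: "hom C (\<one>\<^bsub>T\<^esub> \<otimes> \<epsilon>) (T \<star> T \<star> V) T"
    using tar_hom[OF ident_hom[OF T] \<epsilon>] tob_unit[OF T] by simp
  have "(\<one>\<^bsub>T\<^esub> \<otimes> \<epsilon>) \<cdot> (?b \<otimes> \<one>\<^bsub>V\<^esub>) \<cdot> (\<one>\<^bsub>T\<^esub> \<otimes> (?bV \<cdot> \<eta>))
      = (\<one>\<^bsub>T\<^esub> \<otimes> \<epsilon>) \<cdot> ((?b \<otimes> \<one>\<^bsub>V\<^esub>) \<cdot> (\<one>\<^bsub>T\<^esub> \<otimes> ?bV)) \<cdot> (\<one>\<^bsub>T\<^esub> \<otimes> \<eta>)"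
    using ident_tar_cmp[OF T \<eta> bV] cmp_assoc[OF T_\<eta> T_bV b_V] by simp
  also have "\<dots> = ((\<one>\<^bsub>T\<^esub> \<otimes> \<epsilon>) \<cdot> ?bTV) \<cdot> (\<one>\<^bsub>T\<^esub> \<otimes> \<eta>)"
    using inv_braid_tob_right[OF T T V] cmp_assoc[OF T_\<eta> bTV T_\<epsilon>] by simp
  also have "\<dots> = \<one>\<^bsub>T\<^esub>"
    using ident_tar_to_unit_cmp_inv_braid[OF T \<epsilon>] zigzag by simp
  finally show ?thesis .
qed

lemma symmetric_obj_inv_braid_tar:
  assumes T: "T \<in> Ob C" and sym: "symmetric_obj C T"
  shows "\<one>\<^bsub>T\<^esub> \<otimes> inv_arr C (braid C T T) = inv_arr C (braid C T T) \<otimes> \<one>\<^bsub>T\<^esub>"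
proof -
  note b = braid_iso[OF T T] braid_hom[OF T T] and iT = ident_is_iso[OF T] ident_hom[OF T]
  have b_T: "is_iso C (braid C T T \<otimes> \<one>\<^bsub>T\<^esub>)" "hom C (braid C T T \<otimes> \<one>\<^bsub>T\<^esub>) (T \<star> T \<star> T) (T \<star> T \<star> T)"
    using is_iso_tar[OF b iT] tar_hom[OF b(2) iT(2)] tob_assoc[OF T T T] by simp_all
  have T_b: "hom C (\<one>\<^bsub>T\<^esub> \<otimes> inv_arr C (braid C T T)) (T \<star> T \<star> T) (T \<star> T \<star> T)"
    by (rule tar_hom[OF iT(2) inv_arr_hom[OF b]])
  have "\<one>\<^bsub>T\<^esub> \<otimes> inv_arr C (braid C T T) = inv_arr C (braid C T T \<otimes> \<one>\<^bsub>T\<^esub>)"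
    using left_inverse_eq_inv_arr[OF b_T T_b] sym unfolding symmetric_obj_def by simp
  also have "\<dots> = inv_arr C (braid C T T) \<otimes> \<one>\<^bsub>T\<^esub>"
    using inv_arr_tar[OF b iT] inv_arr_ident[OF T] by simp
  finally show ?thesis .
qed

lemma tar_scalar_factor:
  assumes f: "hom C f X Y" and u: "hom C u S W" and v: "hom C v W S"
  shows "(\<one>\<^bsub>Y\<^esub> \<otimes> v) \<cdot> (f \<otimes> \<one>\<^bsub>W\<^esub>) \<cdot> (\<one>\<^bsub>X\<^esub> \<otimes> u) = f \<otimes> (v \<cdot> u)"
proof -
  have "(f \<otimes> \<one>\<^bsub>W\<^esub>) \<cdot> (\<one>\<^bsub>X\<^esub> \<otimes> u) = f \<otimes> u"
    using interchange[OF ident_hom[OF hom_ob(1)[OF f]] f u ident_hom[OF hom_ob(2)[OF u]], symmetric]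
      cmp_ident[OF f] ident_cmp[OF u] by simp
  moreover have "(\<one>\<^bsub>Y\<^esub> \<otimes> v) \<cdot> (f \<otimes> u) = f \<otimes> (v \<cdot> u)"
    using interchange[OF f ident_hom[OF hom_ob(2)[OF f]] u v, symmetric] ident_cmp[OF f] by simp
  ultimately show ?thesis
    by simp
qed

lemma inv_braid_tar_euler_char:
  assumes T: "T \<in> Ob C" and sym: "symmetric_obj C T" and dual: "is_dual C T V \<eta> \<epsilon>"
  shows "inv_arr C (braid C T T) \<otimes> euler_char C T V \<eta> \<epsilon> = \<one>\<^bsub>T \<star> T\<^esub>"
proof -
  have V: "V \<in> Ob C" and \<eta>: "hom C \<eta> S (V \<star> T)" and \<epsilon>: "hom C \<epsilon> (T \<star> V) S"
    using dual unfolding is_dual_def by auto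
  let ?b = "inv_arr C (braid C T T)" and ?e = "inv_arr C (braid C T V) \<cdot> \<eta>"
  note iT = ident_hom[OF T] and iV = ident_hom[OF V]
  have b: "hom C ?b (T \<star> T) (T \<star> T)"
    using inv_arr_hom[OF braid_iso braid_hom] T by blast
  have e: "hom C ?e S (T \<star> V)"
    using cmp_hom[OF \<eta> inv_arr_hom[OF braid_iso braid_hom]] T V by blast
  have b_V: "hom C (?b \<otimes> \<one>\<^bsub>V\<^esub>) (T \<star> T \<star> V) (T \<star> T \<star> V)"
    using tar_hom[OF b iV] tob_assoc T V by simp
  have T_e: "hom C (\<one>\<^bsub>T\<^esub> \<otimes> ?e) T (T \<star> T \<star> V)"
    using tar_hom[OF iT e] tob_unit[OF T] by simp
  have T_\<epsilon>: "hom C (\<one>\<^bsub>T\<^esub> \<otimes> \<epsilon>) (T \<star> T \<star> V) T"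
    using tar_hom[OF iT \<epsilon>] tob_unit[OF T] by simp
  have "?b \<otimes> \<one>\<^bsub>T \<star> V\<^esub> = \<one>\<^bsub>T\<^esub> \<otimes> ?b \<otimes> \<one>\<^bsub>V\<^esub>"
    using tar_ident[OF T V] tar_assoc[OF b iT iV] symmetric_obj_inv_braid_tar[OF T sym]
      tar_assoc[OF iT b iV] by simp
  then have "?b \<otimes> euler_char C T V \<eta> \<epsilon>
      = (\<one>\<^bsub>T\<^esub> \<otimes> \<one>\<^bsub>T\<^esub> \<otimes> \<epsilon>) \<cdot> (\<one>\<^bsub>T\<^esub> \<otimes> ?b \<otimes> \<one>\<^bsub>V\<^esub>) \<cdot> (\<one>\<^bsub>T\<^esub> \<otimes> \<one>\<^bsub>T\<^esub> \<otimes> ?e)"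
    using tar_scalar_factor[OF b e \<epsilon>, symmetric] tar_ident[OF T T]
      tar_assoc[OF iT iT \<epsilon>] tar_assoc[OF iT iT e]
    unfolding euler_char_def by simp
  also have "\<dots> = \<one>\<^bsub>T\<^esub> \<otimes> ((\<one>\<^bsub>T\<^esub> \<otimes> \<epsilon>) \<cdot> (?b \<otimes> \<one>\<^bsub>V\<^esub>) \<cdot> (\<one>\<^bsub>T\<^esub> \<otimes> ?e))"
    using ident_tar_cmp[OF T T_e b_V] ident_tar_cmp[OF T cmp_hom[OF T_e b_V] T_\<epsilon>] by simp
  also have "\<dots> = \<one>\<^bsub>T \<star> T\<^esub>"
    using braided_zigzag[OF T dual] tar_ident[OF T T] by simp
  finally show ?thesis .
qed

end

theorem lemma3p11:
  fixes C :: "('o, 'm) bmcat" and T Tv :: 'o and \<eta> \<epsilon> :: 'm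
  assumes "braided_strict_monoidal C"
    and "T \<in> Ob C"
    and "symmetric_obj C T"
    and "is_dual C T Tv \<eta> \<epsilon>"
  shows "twisted_trivial_braiding C T (tar C (ident C T) (euler_char C T Tv \<eta> \<epsilon>))"
proof -
  interpret braided_strict_monoidal_category C
    by (rule braided_strict_monoidal_category.intro) (rule assms(1))
  let ?b = "braid C T T" and ?\<chi> = "euler_char C T Tv \<eta> \<epsilon>"
  note b = braid_iso[OF assms(2,2)] braid_hom[OF assms(2,2)]
  note \<chi> = euler_char_hom[OF assms(2,4)]
  have "?b = ?b \<cdot> (inv_arr C ?b \<otimes> ?\<chi>)"
    using inv_braid_tar_euler_char[OF assms(2-4)] cmp_ident[OF b(2)] by simp
  also have "\<dots> = (?b \<cdot> inv_arr C ?b) \<otimes> (\<one>\<^bsub>S\<^esub> \<cdot> ?\<chi>)"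
    using interchange[OF inv_arr_hom[OF b] b(2) \<chi> ident_hom[OF unit_ob]] tar_unit[OF b(2)] by simp
  also have "\<dots> = \<one>\<^bsub>T\<^esub> \<otimes> \<one>\<^bsub>T\<^esub> \<otimes> ?\<chi>"
    using right_inv_arr[OF b] ident_cmp[OF \<chi>] tar_ident[OF assms(2,2), symmetric]
      tar_assoc[OF ident_hom[OF assms(2)] ident_hom[OF assms(2)] \<chi>] by simp
  finally show ?thesis
    unfolding twisted_trivial_braiding_def .
qed

end
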